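(* Let $f:\mathbb{R}^\ell\times\mathbb{R}^m\to\mathbb{R}^\ell$ be $C^1$ and let $\Lambda:\mathbb{R}\to\mathbb{R}^m$ be a parameter shift with limits $\lambda_\pm$. Suppose $X:\mathbb{R}\to\mathbb{R}^\ell$ defines a stable path with endpoints $X_\pm$. Then for each $r>0$ there is a unique solution $\{x_n^r\}_{n\in\mathbb{Z}}$ of the nonautonomous map $x_{n+1}=f(x_n,\Lambda(rn))$ satisfying $\lim_{n\to-\infty}x_n^r=X_-$.
   Context: A parameter shift is a $C^1$ function $\Lambda:\mathbb{R}\to\mathbb{R}^m$ with $\lim_{s\to\pm\infty}\Lambda(s)=\lambda_\pm$ and $\lim_{s\to\pm\infty}\Lambda'(s)=0$. For $r>0$, a solution of the nonautonomous map $x_{n+1}=f(x_n,\Lambda(rn))$ is a sequence $\{x_n\}_{n\in\mathbb{Z}}$ in $\mathbb{R}^\ell$ satisfying this relation for all $n\in\mathbb{Z}$; the map $f(\cdot,\lambda)$ need not be invertible. For a square matrix $M$, $\rho(M)$ denotes its spectral radius. A stable path is given by $X:\mathbb{R}\to\mathbb{R}^\ell$ such that: for every $s$, $X(s)$ is a fixed point of $f(\cdot,\Lambda(s))$; the set $\{(s,X(s)):s\in\mathbb{R}\}$ is a connected curve; the limits $X_\pm=\lim_{s\to\pm\infty}X(s)$ exist and are fixed points of $f(\cdot,\lambda_\pm)$; and $\rho(D_xf(X(s),\Lambda(s)))<1$ for all $s\in\mathbb{R}\cup\{\pm\infty\}$, where $X(\pm\infty)=X_\pm$ and $\Lambda(\pm\infty)=\lambda_\pm$.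 *)

theory Defs
  imports "HOL-Analysis.Analysis"
begin

definition complex_eigenvalues :: "real^'n^'n \<Rightarrow> complex set" where
  "complex_eigenvalues A =
     {z. \<exists>v::complex^'n. v \<noteq> 0 \<and> (map_matrix complex_of_real A) *v v = z *s v}"

definition spectral_rad :: "real^'n^'n \<Rightarrow> real" where
  "spectral_rad A = Max (cmod ` complex_eigenvalues A)"

text \<open>Jacobian with respect to the state variable x of f at (x, lambda),
  where f' is the (total) Frechet derivative of f.\<close>
definition Dx :: "('a \<Rightarrow> ((real^'l) \<times> (real^'m)) \<Rightarrow>\<^sub>L (real^'l)) \<Rightarrow> 'a \<Rightarrow> real^'l^'l" where
  "Dx f' z = matrix (\<lambda>v. blinfun_apply (f' z) (v, 0))"

definition parameter_shift :: "(real \<Rightarrow> real^'m) \<Rightarrow> real^'m \<Rightarrow> real^'m \<Rightarrow> bool" where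
  "parameter_shift \<Lambda> lm lp \<longleftrightarrow>
     (\<exists>\<Lambda>'. (\<forall>s. (\<Lambda> has_vector_derivative \<Lambda>' s) (at s)) \<and> continuous_on UNIV \<Lambda>' \<and>
        (\<Lambda> \<longlongrightarrow> lm) at_bot \<and> (\<Lambda> \<longlongrightarrow> lp) at_top \<and>
        (\<Lambda>' \<longlongrightarrow> 0) at_bot \<and> (\<Lambda>' \<longlongrightarrow> 0) at_top)"

definition stable_path ::
  "((real^'l) \<times> (real^'m) \<Rightarrow> real^'l) \<Rightarrow> ((real^'l) \<times> (real^'m) \<Rightarrow> ((real^'l) \<times> (real^'m)) \<Rightarrow>\<^sub>L (real^'l))
   \<Rightarrow> (real \<Rightarrow> real^'m) \<Rightarrow> real^'m \<Rightarrow> real^'m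
   \<Rightarrow> (real \<Rightarrow> real^'l) \<Rightarrow> real^'l \<Rightarrow> real^'l \<Rightarrow> bool" where
  "stable_path f f' \<Lambda> lm lp X Xm Xp \<longleftrightarrow>
     (\<forall>s. f (X s, \<Lambda> s) = X s) \<and>
     connected {(s, X s) | s. True} \<and>
     (X \<longlongrightarrow> Xm) at_bot \<and> (X \<longlongrightarrow> Xp) at_top \<and>
     f (Xm, lm) = Xm \<and> f (Xp, lp) = Xp \<and>
     (\<forall>s. spectral_rad (Dx f' (X s, \<Lambda> s)) < 1) \<and>
     spectral_rad (Dx f' (Xm, lm)) < 1 \<and> spectral_rad (Dx f' (Xp, lp)) < 1"

end

(*
  Only the stability of the left endpoint matters. The Jacobian A = D_x f(X_-, lambda_-) has
  spectral radius below 1, so its powers decay exponentially and N v = sum_{k<K} |A^k v| is, for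
  large K, an equivalent norm in which A is a strict contraction. By continuity of the derivative,
  every map f(., lambda) with lambda close to lambda_- then contracts a small N-ball B around X_-.
  Since Lambda(r n) tends to lambda_- as n -> -infinity, the maps g_n = f(., Lambda(r n)) contract B
  for all n <= n0 and move X_- by an amount tending to 0. The solution at time t is the limit of the
  orbits started at X_- at the times t - i, i -> infinity, continued beyond n0 by iteration. Any
  solution tending to X_- stays in B in the distant past, so its distance to this one shrinks by a
  fixed factor in every step, and the two coincide.
*)

theory Submission
  imports Defs "Jordan_Normal_Form.Spectral_Radius"
begin

section \<open>Spectral radius and powers of a matrix\<close>

(* Jordan_Normal_Form's infix "$" for vector indexing would hide component selection on
   Finite_Cartesian_Product vectors. *)
no_notation vec_index (infixl "$" 100)

primrec matpow :: "'a::semiring_1^'n^'n \<Rightarrow> nat \<Rightarrow> 'a^'n^'n" where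
  "matpow A 0 = Finite_Cartesian_Product.mat 1"
| "matpow A (Suc k) = matpow A k ** A"

lemma matpow_mult_vec: "matpow A k *v v = ((*v) A ^^ k) v"
  by (induction k arbitrary: v) (simp_all add: matrix_vector_mul_assoc[symmetric] funpow_swap1)

lemma matpow_map_of_real:
  "matpow (map_matrix of_real A) k = map_matrix (of_real :: real \<Rightarrow> 'a::real_algebra_1) (matpow A k)"
  by (induction k)
     (auto simp: Finite_Cartesian_Product.vec_eq_iff Finite_Cartesian_Product.mat_def
        matrix_matrix_mult_def)

(* Matrices indexed by a finite type are transferred, along a fixed enumeration of the index type,
   to Jordan_Normal_Form, which bounds the powers of a complex matrix of spectral radius below 1. *)

definition enum_index :: "nat \<Rightarrow> 'n::finite" where
  "enum_index = (SOME h. bij_betw h {..<CARD('n)} UNIV)"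

lemma bij_betw_enum_index: "bij_betw enum_index {..<CARD('n)} (UNIV :: 'n::finite set)"
proof -
  have "\<exists>h. bij_betw h {..<CARD('n)} (UNIV :: 'n set)"
    using ex_bij_betw_nat_finite[of "UNIV :: 'n set"] by (simp add: atLeast0LessThan)
  then show ?thesis
    unfolding enum_index_def by (rule someI_ex)
qed

lemma sum_enum_index: "(\<Sum>i<CARD('n). g (enum_index i)) = (\<Sum>a\<in>(UNIV :: 'n::finite set). g a)"
  using sum.reindex_bij_betw[OF bij_betw_enum_index] .

lemma ex_enum_index: "\<exists>i<CARD('n). a = enum_index i" for a :: "'n::finite"
  using bij_betw_enum_index[where 'n='n] by (metis UNIV_I bij_betw_iff_bijections lessThan_iff)

lemma enum_index_eq_iff:
  "i < CARD('n) \<Longrightarrow> j < CARD('n) \<Longrightarrow> (enum_index i :: 'n::finite) = enum_index j \<longleftrightarrow> i = j"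
  using bij_betw_enum_index[where 'n='n] by (auto simp: bij_betw_def inj_on_def)

definition from_hma_mat :: "'a^'n::finite^'n \<Rightarrow> 'a Matrix.mat" where
  "from_hma_mat M = Matrix.mat CARD('n) CARD('n) (\<lambda>(i, j). M $ enum_index i $ enum_index j)"

definition from_hma_vec :: "'a^'n::finite \<Rightarrow> 'a Matrix.vec" where
  "from_hma_vec v = Matrix.vec CARD('n) (\<lambda>i. v $ enum_index i)"

lemma from_hma_mat_carrier [simp]:
  "from_hma_mat (M :: 'a^'n::finite^'n) \<in> carrier_mat CARD('n) CARD('n)"
  by (simp add: from_hma_mat_def)

lemma dim_from_hma_mat [simp]:
  "dim_row (from_hma_mat (M :: 'a^'n::finite^'n)) = CARD('n)" "dim_col (from_hma_mat M) = CARD('n)"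
  by (simp_all add: from_hma_mat_def)

lemma from_hma_vec_carrier [simp]: "from_hma_vec (v :: 'a^'n::finite) \<in> carrier_vec CARD('n)"
  by (simp add: from_hma_vec_def)

lemma from_hma_mat_mult:
  "from_hma_mat (M ** N) = from_hma_mat M * from_hma_mat (N :: 'a::comm_semiring_1^'n::finite^'n)"
  by (rule eq_matI)
     (simp_all add: from_hma_mat_def matrix_matrix_mult_def scalar_prod_def atLeast0LessThan
        sum_enum_index[symmetric])

lemma from_hma_mat_one:
  "from_hma_mat (Finite_Cartesian_Product.mat 1 :: 'a::semiring_1^'n::finite^'n) = 1\<^sub>m CARD('n)"
  by (rule eq_matI)
     (simp_all add: from_hma_mat_def Finite_Cartesian_Product.mat_def enum_index_eq_iff)

lemma from_hma_mat_matpow: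
  "from_hma_mat (matpow M k) = from_hma_mat (M :: 'a::comm_semiring_1^'n::finite^'n) ^\<^sub>m k"
  by (induction k) (simp_all add: from_hma_mat_one from_hma_mat_mult)

lemma from_hma_mat_mult_vec:
  "from_hma_mat M *\<^sub>v from_hma_vec v = from_hma_vec (M *v (v :: 'a::comm_semiring_1^'n::finite))"
  by (rule eq_vecI)
     (simp_all add: from_hma_mat_def from_hma_vec_def matrix_vector_mult_def scalar_prod_def
        atLeast0LessThan sum_enum_index[symmetric])

lemma from_hma_vec_zero: "from_hma_vec (0 :: 'a::zero^'n::finite) = 0\<^sub>v CARD('n)"
  by (rule eq_vecI) (simp_all add: from_hma_vec_def)

lemma from_hma_vec_smult: "from_hma_vec (c *s v) = c \<cdot>\<^sub>v from_hma_vec (v :: 'a::times^'n::finite)"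
  by (rule eq_vecI) (simp_all add: from_hma_vec_def)

lemma from_hma_vec_eq_iff: "from_hma_vec u = from_hma_vec v \<longleftrightarrow> u = (v :: 'a^'n::finite)"
proof
  assume eq: "from_hma_vec u = from_hma_vec v"
  show "u = v"
  proof (rule Finite_Cartesian_Product.vec_eq_iff[THEN iffD2], rule allI)
    fix a :: 'n
    obtain i where "i < CARD('n)" "a = enum_index i"
      using ex_enum_index by blast
    then show "u $ a = v $ a"
      using arg_cong[OF eq, of "\<lambda>w. vec_index w i"] by (simp add: from_hma_vec_def)
  qed
qed simp

lemma from_hma_vec_surj: "w \<in> carrier_vec CARD('n) \<Longrightarrow> \<exists>v :: 'a^'n::finite. w = from_hma_vec v"
proof
  assume "w \<in> carrier_vec CARD('n)"
  let ?v = "\<chi> a. vec_index w (inv_into {..<CARD('n)} enum_index a) :: 'a^'n"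
  show "w = from_hma_vec ?v"
    using \<open>w \<in> carrier_vec CARD('n)\<close>
    by (intro eq_vecI)
       (simp_all add: from_hma_vec_def bij_betw_inv_into_left[OF bij_betw_enum_index])
qed

lemma eigenvalue_from_hma_mat_iff:
  "eigenvalue (from_hma_mat M) z \<longleftrightarrow> (\<exists>v. v \<noteq> 0 \<and> M *v v = z *s (v :: 'a::field^'n::finite))"
proof
  assume "eigenvalue (from_hma_mat M) z"
  then obtain w where "w \<in> carrier_vec CARD('n)" "w \<noteq> 0\<^sub>v CARD('n)" "from_hma_mat M *\<^sub>v w = z \<cdot>\<^sub>v w"
    unfolding eigenvalue_def eigenvector_def by auto
  moreover obtain v :: "'a^'n" where "w = from_hma_vec v"
    using from_hma_vec_surj \<open>w \<in> carrier_vec CARD('n)\<close> by blast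
  ultimately have "from_hma_vec v \<noteq> from_hma_vec (0 :: 'a^'n)"
    and "from_hma_vec (M *v v) = from_hma_vec (z *s v)"
    by (simp_all add: from_hma_vec_zero from_hma_vec_smult from_hma_mat_mult_vec[symmetric])
  then show "\<exists>v. v \<noteq> 0 \<and> M *v v = z *s v"
    unfolding from_hma_vec_eq_iff by blast
next
  assume "\<exists>v. v \<noteq> 0 \<and> M *v v = z *s v"
  then obtain v :: "'a^'n" where "from_hma_vec v \<noteq> 0\<^sub>v CARD('n)"
    and "from_hma_mat M *\<^sub>v from_hma_vec v = z \<cdot>\<^sub>v from_hma_vec v"
    unfolding from_hma_mat_mult_vec from_hma_vec_zero[symmetric] from_hma_vec_smult[symmetric]
      from_hma_vec_eq_iff
    by blast
  then show "eigenvalue (from_hma_mat M) z"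
    unfolding eigenvalue_def eigenvector_def by (intro exI[of _ "from_hma_vec v"]) simp
qed

lemma complex_eigenvalues_eq_spectrum:
  "complex_eigenvalues A = spectrum (from_hma_mat (map_matrix complex_of_real A))"
  by (auto simp: complex_eigenvalues_def spectrum_def eigenvalue_from_hma_mat_iff)

lemma spectral_rad_eq_spectral_radius:
  "spectral_rad A = spectral_radius (from_hma_mat (map_matrix complex_of_real A))"
  by (simp add: spectral_rad_def spectral_radius_def complex_eigenvalues_eq_spectrum)

lemma spectral_rad_less_iff: "spectral_rad A < t \<longleftrightarrow> (\<forall>z\<in>complex_eigenvalues A. cmod z < t)"
proof -
  have "spectral_rad A \<in> cmod ` complex_eigenvalues A"
    and "\<And>z. z \<in> complex_eigenvalues A \<Longrightarrow> cmod z \<le> spectral_rad A"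
    using spectral_radius_mem_max[OF from_hma_mat_carrier[of "map_matrix complex_of_real A"]
        zero_less_card_finite]
    unfolding spectral_rad_eq_spectral_radius complex_eigenvalues_eq_spectrum by auto
  then show ?thesis
    by fastforce
qed

lemma spectral_rad_lt_1_imp_matpow_bounded:
  fixes A :: "real^'n^'n"
  assumes "spectral_rad A < 1"
  shows "\<exists>c. \<forall>k v. norm (matpow A k *v v) \<le> c * norm v"
proof -
  let ?B = "from_hma_mat (map_matrix complex_of_real A)"
  have "spectral_radius ?B < 1"
    using assms by (simp add: spectral_rad_eq_spectral_radius)
  then obtain c where c: "\<And>k. norm_bound (?B ^\<^sub>m k) c"
    using spectral_radius_jnf_norm_bound_less_1_upper_triangular[OF from_hma_mat_carrier] by blast
  have entry_bound: "\<bar>matpow A k $ a $ b\<bar> \<le> c" for k a b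
  proof -
    obtain i j where ij: "i < CARD('n)" "a = enum_index i" "j < CARD('n)" "b = enum_index j"
      using ex_enum_index by metis
    have "cmod ((?B ^\<^sub>m k) $$ (i, j)) \<le> c"
      using c[of k] ij unfolding norm_bound_def by (metis pow_mat_dim_square from_hma_mat_carrier)
    moreover have "(?B ^\<^sub>m k) $$ (i, j) = complex_of_real (matpow A k $ a $ b)"
      using ij unfolding from_hma_mat_matpow[symmetric] matpow_map_of_real
      by (simp add: from_hma_mat_def)
    ultimately show ?thesis
      by simp
  qed
  have "norm (matpow A k *v v) \<le> real CARD('n) * real CARD('n) * c * norm v" for k v
  proof -
    have "norm (matpow A k *v v) \<le> onorm ((*v) (matpow A k)) * norm v"
      by (rule onorm) (rule matrix_vector_mul_bounded_linear)
    also have "\<dots> \<le> real CARD('n) * real CARD('n) * c * norm v"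
      by (rule mult_right_mono[OF onorm_le_matrix_component[OF entry_bound]]) simp
    finally show ?thesis .
  qed
  then show ?thesis
    by blast
qed

lemma complex_eigenvalues_scaleR:
  "z \<in> complex_eigenvalues A \<Longrightarrow> complex_of_real c * z \<in> complex_eigenvalues (c *\<^sub>R A)"
proof -
  assume "z \<in> complex_eigenvalues A"
  then obtain v where v: "v \<noteq> 0" "map_matrix complex_of_real A *v v = z *s v"
    by (auto simp: complex_eigenvalues_def)
  have "map_matrix complex_of_real (c *\<^sub>R A) *v v =
      complex_of_real c *s (map_matrix complex_of_real A *v v)"
    by (simp add: Finite_Cartesian_Product.vec_eq_iff matrix_vector_mult_def sum_distrib_left
        mult.assoc)
  with v show ?thesis
    by (auto simp: complex_eigenvalues_def)
qed

lemma funpow_scaleR_linear: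
  fixes L :: "'a::real_vector \<Rightarrow> 'a"
  assumes "linear L"
  shows "((\<lambda>v. c *\<^sub>R L v) ^^ k) v = c ^ k *\<^sub>R (L ^^ k) v"
proof (induction k)
  case (Suc k)
  have "((\<lambda>v. c *\<^sub>R L v) ^^ Suc k) v = c *\<^sub>R L (c ^ k *\<^sub>R (L ^^ k) v)"
    using Suc.IH by simp
  then show ?case
    by (simp add: linear.scaleR[OF assms])
qed simp

definition exponentially_stable :: "('a::real_normed_vector \<Rightarrow> 'a) \<Rightarrow> bool" where
  "exponentially_stable L \<longleftrightarrow>
     (\<exists>c q. 0 \<le> q \<and> q < 1 \<and> (\<forall>k v. norm ((L ^^ k) v) \<le> c * q ^ k * norm v))"

(* Powers of A are q^k times powers of A/q, and A/q still has spectral radius below 1. *)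

lemma spectral_rad_lt_1_imp_exponentially_stable:
  fixes A :: "real^'n^'n"
  assumes "spectral_rad A < 1"
  shows "exponentially_stable ((*v) A)"
proof -
  define q where "q = (1 + max (spectral_rad A) 0) / 2"
  have q: "0 < q" "q < 1" "spectral_rad A < q"
    using assms by (auto simp: q_def)
  define B where "B = (1 / q) *\<^sub>R A"
  have "spectral_rad B < 1"
    unfolding spectral_rad_less_iff
  proof
    fix z
    assume "z \<in> complex_eigenvalues B"
    then have "complex_of_real q * z \<in> complex_eigenvalues A"
      using complex_eigenvalues_scaleR[of z B q] q by (simp add: B_def)
    then have "cmod (complex_of_real q * z) < q"
      using q(3) unfolding spectral_rad_less_iff by blast
    then have "q * cmod z < q * 1"
      using q(1) by (simp add: norm_mult)
    then show "cmod z < 1"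
      by (metis mult_less_cancel_left_pos q(1))
  qed
  then obtain c where c: "\<And>k v. norm (matpow B k *v v) \<le> c * norm v"
    using spectral_rad_lt_1_imp_matpow_bounded by blast
  have "(*v) A = (\<lambda>v. q *\<^sub>R (B *v v))"
    using q(1) by (auto simp: B_def scaleR_matrix_vector_assoc)
  then have "((*v) A ^^ k) v = q ^ k *\<^sub>R (matpow B k *v v)" for k v
    by (simp add: funpow_scaleR_linear matpow_mult_vec)
  then have "norm (((*v) A ^^ k) v) \<le> c * q ^ k * norm v" for k v
    using c[of k v] q(1) by (simp add: mult_left_mono mult.commute mult.left_commute)
  with q show ?thesis
    unfolding exponentially_stable_def by (intro exI[of _ c] exI[of _ q]) auto
qed

section \<open>Equivalent and adapted norms\<close>

locale equivalent_norm =
  fixes N :: "'a::real_normed_vector \<Rightarrow> real" and C :: real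
  assumes N_add: "N (u + v) \<le> N u + N v"
    and N_minus: "N (- v) = N v"
    and norm_le_N: "norm v \<le> N v"
    and N_le: "N v \<le> C * norm v"
begin

lemma N_nonneg: "0 \<le> N v"
  using norm_le_N[of v] norm_ge_zero[of v] by linarith

lemma N_zero [simp]: "N 0 = 0"
  using N_le[of 0] N_nonneg[of 0] by simp

lemma N_le_0_iff: "N v \<le> 0 \<longleftrightarrow> v = 0"
  using norm_le_N[of v] N_nonneg[of v] by auto

lemma N_triangle: "N (u - w) \<le> N (u - v) + N (v - w)"
  using N_add[of "u - v" "v - w"] by simp

lemma N_commute: "N (u - v) = N (v - u)"
  using N_minus[of "u - v"] by simp

lemma tendsto_iff_N: "(f \<longlongrightarrow> l) F \<longleftrightarrow> ((\<lambda>x. N (f x - l)) \<longlongrightarrow> 0) F"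
proof
  assume "(f \<longlongrightarrow> l) F"
  then have "((\<lambda>x. norm (f x - l)) \<longlongrightarrow> 0) F"
    by (rule tendsto_norm_zero[OF LIM_zero])
  then have upper: "((\<lambda>x. C * norm (f x - l)) \<longlongrightarrow> 0) F"
    by (rule tendsto_mult_right_zero)
  show "((\<lambda>x. N (f x - l)) \<longlongrightarrow> 0) F"
    by (rule tendsto_sandwich[OF always_eventually always_eventually tendsto_const upper])
       (simp_all add: N_nonneg N_le)
next
  assume upper: "((\<lambda>x. N (f x - l)) \<longlongrightarrow> 0) F"
  have "((\<lambda>x. norm (f x - l)) \<longlongrightarrow> 0) F"
    by (rule tendsto_sandwich[OF always_eventually always_eventually tendsto_const upper])
       (simp_all add: norm_le_N)
  then show "(f \<longlongrightarrow> l) F"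
    by (rule LIM_zero_cancel[OF tendsto_norm_zero_cancel])
qed

lemma tendsto_N_diff:
  assumes "(f \<longlongrightarrow> l) F"
  shows "((\<lambda>x. N (f x - p)) \<longlongrightarrow> N (l - p)) F"
proof (rule tendsto_sandwich)
  have "((\<lambda>x. N (f x - l)) \<longlongrightarrow> 0) F"
    using assms by (simp add: tendsto_iff_N)
  from tendsto_diff[OF tendsto_const this] tendsto_add[OF tendsto_const this]
  show "((\<lambda>x. N (l - p) - N (f x - l)) \<longlongrightarrow> N (l - p)) F"
    and "((\<lambda>x. N (l - p) + N (f x - l)) \<longlongrightarrow> N (l - p)) F"
    by simp_all
  show "\<forall>\<^sub>F x in F. N (l - p) - N (f x - l) \<le> N (f x - p)"
  proof (rule always_eventually, rule allI)
    fix x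
    have "N (l - p) \<le> N (l - f x) + N (f x - p)"
      by (rule N_triangle)
    then show "N (l - p) - N (f x - l) \<le> N (f x - p)"
      using N_commute[of l "f x"] by simp
  qed
  show "\<forall>\<^sub>F x in F. N (f x - p) \<le> N (l - p) + N (f x - l)"
  proof (rule always_eventually, rule allI)
    fix x
    show "N (f x - p) \<le> N (l - p) + N (f x - l)"
      using N_triangle[of "f x" p l] by simp
  qed
qed

lemma N_limit_le:
  assumes "(f \<longlongrightarrow> l) F" "F \<noteq> bot" "\<forall>\<^sub>F x in F. N (f x - p) \<le> \<rho>"
  shows "N (l - p) \<le> \<rho>"
  using tendsto_upperbound[OF tendsto_N_diff[OF assms(1)] assms(3)] assms(2) by simp

lemma N_perturbed_contraction:
  assumes "N a \<le> \<theta> * N u" "\<theta> \<le> 1" "norm e \<le> (1 - \<theta>) / (2 * max C 1) * norm u"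
  shows "N (a + e) \<le> (1 + \<theta>) / 2 * N u"
proof -
  have "N e \<le> max C 1 * norm e"
    using N_le[of e] by (meson max.cobounded1 mult_right_mono norm_ge_zero order_trans)
  also have "\<dots> \<le> max C 1 * ((1 - \<theta>) / (2 * max C 1) * norm u)"
    using assms(3) by (intro mult_left_mono) auto
  also have "\<dots> = (1 - \<theta>) / 2 * norm u"
    by (simp add: field_simps)
  also have "\<dots> \<le> (1 - \<theta>) / 2 * N u"
    using assms(2) norm_le_N by (intro mult_left_mono) auto
  finally have "N e \<le> (1 - \<theta>) / 2 * N u" .
  moreover have "\<theta> * N u + (1 - \<theta>) / 2 * N u = (1 + \<theta>) / 2 * N u"
    by (simp add: field_simps)
  ultimately show ?thesis
    using N_add[of a e] assms(1) by linarith
qed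

end

definition adapted_norm :: "('a \<Rightarrow> 'a) \<Rightarrow> nat \<Rightarrow> 'a::real_normed_vector \<Rightarrow> real" where
  "adapted_norm L K v = (\<Sum>k<K. norm ((L ^^ k) v))"

lemma linear_funpow:
  fixes L :: "'a::real_vector \<Rightarrow> 'a"
  shows "linear L \<Longrightarrow> linear (L ^^ k)"
  by (induction k) (simp_all add: linear_compose linear_id)

lemma adapted_norm_add:
  "linear L \<Longrightarrow> adapted_norm L K (u + v) \<le> adapted_norm L K u + adapted_norm L K v"
  unfolding adapted_norm_def sum.distrib[symmetric]
  by (rule sum_mono) (simp add: linear_add[OF linear_funpow] norm_triangle_ineq)

lemma adapted_norm_minus: "linear L \<Longrightarrow> adapted_norm L K (- v) = adapted_norm L K v"
  by (simp add: adapted_norm_def linear_neg[OF linear_funpow])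

lemma norm_le_adapted_norm:
  assumes "0 < K"
  shows "norm v \<le> adapted_norm L K v"
proof -
  have "norm ((L ^^ 0) v) \<le> (\<Sum>k<K. norm ((L ^^ k) v))"
    by (rule member_le_sum) (use assms in auto)
  then show ?thesis
    by (simp add: adapted_norm_def)
qed

lemma adapted_norm_le:
  "(\<And>k. norm ((L ^^ k) v) \<le> D * norm v) \<Longrightarrow> adapted_norm L K v \<le> real K * D * norm v"
  unfolding adapted_norm_def using sum_mono[of "{..<K}" "\<lambda>k. norm ((L ^^ k) v)" "\<lambda>_. D * norm v"]
  by (simp add: mult.assoc)

lemma adapted_norm_apply:
  "adapted_norm L K (L v) + norm v = adapted_norm L K v + norm ((L ^^ K) v)"
proof -
  have "adapted_norm L K (L v) + norm v = (\<Sum>k<Suc K. norm ((L ^^ k) v))"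
    unfolding sum.lessThan_Suc_shift by (simp add: adapted_norm_def funpow_swap1)
  also have "\<dots> = adapted_norm L K v + norm ((L ^^ K) v)"
    by (simp add: adapted_norm_def)
  finally show ?thesis .
qed

lemma exponentially_stable_halving_power:
  fixes L :: "'a::real_normed_vector \<Rightarrow> 'a"
  assumes "exponentially_stable L"
  obtains K D where "0 < K" "1 \<le> D" "\<And>k v. norm ((L ^^ k) v) \<le> D * norm v"
    "\<And>v. norm ((L ^^ K) v) \<le> norm v / 2"
proof -
  obtain c q where q: "0 \<le> q" "q < 1" and decay: "\<And>k v. norm ((L ^^ k) v) \<le> c * q ^ k * norm v"
    using assms unfolding exponentially_stable_def by blast
  have "c * q ^ k \<le> max c 1" for k
    using q mult_left_le[of "q ^ k" c] mult_nonpos_nonneg[of c "q ^ k"]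
    by (cases "0 \<le> c") (auto simp: power_le_one)
  then have bounded: "norm ((L ^^ k) v) \<le> max c 1 * norm v" for k v
    using decay[of k v] by (meson mult_right_mono norm_ge_zero order_trans)
  have "(\<lambda>k. c * q ^ k) \<longlonglongrightarrow> 0"
    using q by (simp add: LIMSEQ_power_zero tendsto_mult_right_zero)
  then have "eventually (\<lambda>k. c * q ^ k < 1 / 2) sequentially"
    by (rule order_tendstoD) simp
  then obtain K0 where "\<And>k. K0 \<le> k \<Longrightarrow> c * q ^ k < 1 / 2"
    by (auto simp: eventually_sequentially)
  then obtain K where "0 < K" "c * q ^ K < 1 / 2"
    using zero_less_Suc le_SucI by blast
  have half: "norm ((L ^^ K) v) \<le> norm v / 2" for v
  proof -
    have "norm ((L ^^ K) v) \<le> c * q ^ K * norm v"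
      by (rule decay)
    also have "\<dots> \<le> 1 / 2 * norm v"
      using \<open>c * q ^ K < 1 / 2\<close> by (intro mult_right_mono) auto
    finally show ?thesis
      by simp
  qed
  show ?thesis
    using \<open>0 < K\<close> bounded half by (intro that[of K "max c 1"]) auto
qed

lemma exponentially_stable_imp_adapted_norm:
  fixes L :: "'a::real_normed_vector \<Rightarrow> 'a"
  assumes "linear L" "exponentially_stable L"
  shows "\<exists>N C \<theta>. equivalent_norm N C \<and> 0 \<le> \<theta> \<and> \<theta> < 1 \<and> (\<forall>v. N (L v) \<le> \<theta> * N v)"
proof -
  obtain K D where "0 < K" "1 \<le> D" and bounded: "\<And>k v. norm ((L ^^ k) v) \<le> D * norm v"
    and half: "\<And>v. norm ((L ^^ K) v) \<le> norm v / 2"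
    using exponentially_stable_halving_power[OF assms(2)] by blast
  define C where "C = real K * D"
  have C: "1 \<le> C"
    using mult_mono[of 1 "real K" 1 D] \<open>0 < K\<close> \<open>1 \<le> D\<close> by (simp add: C_def)
  interpret equivalent_norm "adapted_norm L K" C
  proof
    show "adapted_norm L K (u + v) \<le> adapted_norm L K u + adapted_norm L K v" for u v
      by (rule adapted_norm_add[OF assms(1)])
    show "adapted_norm L K (- v) = adapted_norm L K v" for v
      by (rule adapted_norm_minus[OF assms(1)])
    show "norm v \<le> adapted_norm L K v" for v
      by (rule norm_le_adapted_norm[OF \<open>0 < K\<close>])
    show "adapted_norm L K v \<le> C * norm v" for v
      unfolding C_def by (rule adapted_norm_le[OF bounded])
  qed
  define \<theta> where "\<theta> = 1 - 1 / (2 * C)"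
  have "adapted_norm L K (L v) \<le> \<theta> * adapted_norm L K v" for v
  proof -
    have "adapted_norm L K (L v) \<le> adapted_norm L K v - norm v / 2"
      using adapted_norm_apply[of L K v] half[of v] by linarith
    also have "\<dots> \<le> adapted_norm L K v - adapted_norm L K v / (2 * C)"
      using N_le[of v] C by (simp add: field_simps)
    also have "\<dots> = \<theta> * adapted_norm L K v"
      by (simp add: \<theta>_def algebra_simps)
    finally show ?thesis .
  qed
  moreover have "0 \<le> \<theta>" "\<theta> < 1"
    using C by (auto simp: \<theta>_def field_simps)
  ultimately show ?thesis
    using equivalent_norm_axioms by blast
qed

section \<open>Pullback solutions of eventually contracting nonautonomous maps\<close>

(* flow g m j x is the state at time m + j of the solution of x (n + 1) = g n (x n) that starts
   from x at time m. *)

primrec flow :: "(int \<Rightarrow> 'a \<Rightarrow> 'a) \<Rightarrow> int \<Rightarrow> nat \<Rightarrow> 'a \<Rightarrow> 'a" where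
  "flow g m 0 x = x"
| "flow g m (Suc j) x = g (m + int j) (flow g m j x)"

lemma flow_Suc_shift: "flow g m (Suc j) x = flow g (m + 1) j (g m x)"
  by (induction j) (simp_all add: algebra_simps)

lemma solution_eq_flow:
  assumes "\<And>n. y (n + 1) = g n (y n)"
  shows "y (m + int j) = flow g m j (y m)"
proof (induction j)
  case (Suc j)
  have "y (m + int (Suc j)) = g (m + int j) (y (m + int j))"
    using assms[of "m + int j"] by (simp add: ac_simps)
  with Suc.IH show ?case
    by simp
qed simp

lemma solutions_eq_forward:
  fixes m t :: int
  assumes "\<And>n. x (n + 1) = g n (x n)" "\<And>n. y (n + 1) = g n (y n)" "x m = y m" "m \<le> t"
  shows "x t = y t"
proof -
  have "t = m + int (nat (t - m))"
    using \<open>m \<le> t\<close> by simp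
  then show ?thesis
    using solution_eq_flow[of x g m] solution_eq_flow[of y g m] assms by metis
qed

lemma convergent_if_geometric_steps:
  fixes s :: "nat \<Rightarrow> 'a::banach"
  assumes steps: "\<And>i. norm (s (Suc i) - s i) \<le> c * q ^ i" and q: "0 \<le> q" "q < 1"
  shows "convergent s"
proof -
  have "summable (\<lambda>i. c * q ^ i)"
    using q by (intro summable_mult summable_geometric) simp
  then have "summable (\<lambda>i. s (Suc i) - s i)"
    using steps by (rule summable_comparison_test')
  then obtain d where "(\<lambda>n. \<Sum>i<n. s (Suc i) - s i) \<longlonglongrightarrow> d"
    by (auto simp: summable_iff_convergent convergent_def)
  then have "(\<lambda>n. (s n - s 0) + s 0) \<longlonglongrightarrow> d + s 0"
    unfolding sum_lessThan_telescope by (rule tendsto_add[OF _ tendsto_const])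
  then show ?thesis
    by (auto simp: convergent_def)
qed

locale pullback_contraction = equivalent_norm N C
  for N :: "'a::banach \<Rightarrow> real" and C :: real +
  fixes g :: "int \<Rightarrow> 'a \<Rightarrow> 'a" and p :: 'a and \<delta> \<theta> :: real and n0 :: int
  assumes \<theta>: "0 \<le> \<theta>" "\<theta> < 1" and \<delta>: "0 < \<delta>"
    and contraction: "\<And>n x y. n \<le> n0 \<Longrightarrow> N (x - p) \<le> \<delta> \<Longrightarrow> N (y - p) \<le> \<delta> \<Longrightarrow>
      N (g n x - g n y) \<le> \<theta> * N (x - y)"
    and defect_le: "\<And>n. n \<le> n0 \<Longrightarrow> N (g n p - p) \<le> (1 - \<theta>) * \<delta>"
    and defect_tendsto: "((\<lambda>n. g n p) \<longlongrightarrow> p) at_bot"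
begin

lemma ball_invariant:
  assumes "n \<le> n0" "\<rho> \<le> \<delta>" "N (g n p - p) \<le> (1 - \<theta>) * \<rho>" "N (x - p) \<le> \<rho>"
  shows "N (g n x - p) \<le> \<rho>"
proof -
  have "N (g n x - p) \<le> N (g n x - g n p) + N (g n p - p)"
    by (rule N_triangle)
  also have "\<dots> \<le> \<theta> * N (x - p) + (1 - \<theta>) * \<rho>"
    using contraction[of n x p] assms \<delta> by (intro add_mono) auto
  also have "\<dots> \<le> \<theta> * \<rho> + (1 - \<theta>) * \<rho>"
    using \<theta> assms(4) by (intro add_right_mono mult_left_mono) auto
  finally show ?thesis
    by (simp add: algebra_simps)
qed

lemma flow_in_ball:
  assumes "m + int j \<le> n0 + 1" "\<rho> \<le> \<delta>" "\<And>n. n < m + int j \<Longrightarrow> N (g n p - p) \<le> (1 - \<theta>) * \<rho>"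
    and "N (x - p) \<le> \<rho>"
  shows "N (flow g m j x - p) \<le> \<rho>"
  using assms
proof (induction j)
  case (Suc j)
  then show ?case
    by (simp add: ball_invariant)
qed simp

lemma flow_contraction:
  assumes "m + int j \<le> n0 + 1" "N (x - p) \<le> \<delta>" "N (y - p) \<le> \<delta>"
  shows "N (flow g m j x - flow g m j y) \<le> \<theta> ^ j * N (x - y)"
  using assms
proof (induction j)
  case (Suc j)
  have in_ball: "N (flow g m j z - p) \<le> \<delta>" if "N (z - p) \<le> \<delta>" for z
    using Suc.prems(1) that by (intro flow_in_ball) (auto intro: defect_le)
  have "N (flow g m (Suc j) x - flow g m (Suc j) y) \<le> \<theta> * N (flow g m j x - flow g m j y)"
    using Suc.prems in_ball by (simp add: contraction)
  also have "\<dots> \<le> \<theta> * (\<theta> ^ j * N (x - y))"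
    using Suc \<theta> by (intro mult_left_mono) auto
  finally show ?case
    by simp
qed simp

definition pullback :: "int \<Rightarrow> nat \<Rightarrow> 'a" where
  "pullback t i = flow g (t - int i) i p"

lemma pullback_Suc: "pullback (t + 1) (Suc i) = g t (pullback t i)"
  by (simp add: pullback_def)

lemma pullback_in_ball:
  assumes "t \<le> n0 + 1" "\<rho> \<le> \<delta>" "\<And>n. n < t \<Longrightarrow> N (g n p - p) \<le> (1 - \<theta>) * \<rho>"
  shows "N (pullback t i - p) \<le> \<rho>"
proof -
  have "0 \<le> (1 - \<theta>) * \<rho>"
    using assms(3)[of "t - 1"] N_nonneg[of "g (t - 1) p - p"] by linarith
  then have "0 \<le> \<rho>"
    using \<theta> by (simp add: zero_le_mult_iff)
  then show ?thesis
    unfolding pullback_def using assms by (intro flow_in_ball) auto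
qed

lemma pullback_step:
  assumes "t \<le> n0 + 1"
  shows "norm (pullback t (Suc i) - pullback t i) \<le> (1 - \<theta>) * \<delta> * \<theta> ^ i"
proof -
  let ?m = "t - int (Suc i)"
  have defect: "N (g ?m p - p) \<le> (1 - \<theta>) * \<delta>"
    using assms by (intro defect_le) simp
  moreover have "(1 - \<theta>) * \<delta> \<le> 1 * \<delta>"
    using \<theta> \<delta> by (intro mult_right_mono) auto
  ultimately have "N (g ?m p - p) \<le> \<delta>"
    by simp
  then have "N (flow g (t - int i) i (g ?m p) - flow g (t - int i) i p) \<le> \<theta> ^ i * N (g ?m p - p)"
    using assms \<delta> by (intro flow_contraction) auto
  moreover have "pullback t (Suc i) = flow g (t - int i) i (g ?m p)"
    unfolding pullback_def flow_Suc_shift by simp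
  ultimately have "N (pullback t (Suc i) - pullback t i) \<le> \<theta> ^ i * N (g ?m p - p)"
    by (simp add: pullback_def)
  also have "\<dots> \<le> \<theta> ^ i * ((1 - \<theta>) * \<delta>)"
    using defect \<theta> by (intro mult_left_mono) auto
  finally show ?thesis
    using norm_le_N[of "pullback t (Suc i) - pullback t i"] by (simp add: mult.commute)
qed

definition pullback_limit :: "int \<Rightarrow> 'a" where
  "pullback_limit t = lim (pullback t)"

lemma pullback_tendsto: "t \<le> n0 + 1 \<Longrightarrow> pullback t \<longlonglongrightarrow> pullback_limit t"
  unfolding pullback_limit_def convergent_LIMSEQ_iff[symmetric]
  by (rule convergent_if_geometric_steps[OF pullback_step \<theta>])

lemma pullback_limit_in_ball:
  assumes "t \<le> n0 + 1" "\<rho> \<le> \<delta>" "\<And>n. n < t \<Longrightarrow> N (g n p - p) \<le> (1 - \<theta>) * \<rho>"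
  shows "N (pullback_limit t - p) \<le> \<rho>"
proof (rule N_limit_le[OF pullback_tendsto[OF assms(1)]])
  show "\<forall>\<^sub>F i in sequentially. N (pullback t i - p) \<le> \<rho>"
    using pullback_in_ball[OF assms] by (simp add: always_eventually)
qed simp

lemma pullback_limit_step:
  assumes "t \<le> n0"
  shows "pullback_limit (t + 1) = g t (pullback_limit t)"
proof -
  have t: "t \<le> n0 + 1"
    using assms by simp
  have defect: "\<And>n. n < t \<Longrightarrow> N (g n p - p) \<le> (1 - \<theta>) * \<delta>"
    using assms by (simp add: defect_le)
  have in_ball: "N (pullback t i - p) \<le> \<delta>" "N (pullback_limit t - p) \<le> \<delta>" for i
    using pullback_in_ball[OF t order_refl defect] pullback_limit_in_ball[OF t order_refl defect]
    by simp_all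
  have "((\<lambda>i. N (pullback t i - pullback_limit t)) \<longlongrightarrow> 0) sequentially"
    using tendsto_iff_N[THEN iffD1, OF pullback_tendsto[OF t]] .
  then have upper: "((\<lambda>i. \<theta> * N (pullback t i - pullback_limit t)) \<longlongrightarrow> 0) sequentially"
    by (rule tendsto_mult_right_zero)
  have "((\<lambda>i. N (g t (pullback t i) - g t (pullback_limit t))) \<longlongrightarrow> 0) sequentially"
    by (rule tendsto_sandwich[OF always_eventually always_eventually tendsto_const upper])
       (simp_all add: N_nonneg contraction assms in_ball)
  then have "(\<lambda>i. pullback (t + 1) (Suc i)) \<longlonglongrightarrow> g t (pullback_limit t)"
    unfolding pullback_Suc tendsto_iff_N[symmetric] .
  then have "pullback (t + 1) \<longlonglongrightarrow> g t (pullback_limit t)"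
    by (rule LIMSEQ_imp_Suc)
  with pullback_tendsto[of "t + 1"] show ?thesis
    using assms LIMSEQ_unique by auto
qed

lemma pullback_limit_tendsto: "(pullback_limit \<longlongrightarrow> p) at_bot"
  unfolding tendsto_iff_N
proof (rule order_tendstoI)
  fix a :: real
  assume "a < 0"
  then show "\<forall>\<^sub>F t in at_bot. a < N (pullback_limit t - p)"
    by (intro always_eventually allI) (rule less_le_trans[OF \<open>a < 0\<close> N_nonneg])
next
  fix \<epsilon> :: real
  assume "0 < \<epsilon>"
  define \<rho> where "\<rho> = min \<delta> (\<epsilon> / 2)"
  have \<rho>: "0 < \<rho>" "\<rho> \<le> \<delta>" "\<rho> < \<epsilon>"
    using \<open>0 < \<epsilon>\<close> \<delta> by (auto simp: \<rho>_def)
  have "((\<lambda>n. N (g n p - p)) \<longlongrightarrow> 0) at_bot"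
    using tendsto_iff_N[THEN iffD1, OF defect_tendsto] .
  then have "\<forall>\<^sub>F n in at_bot. N (g n p - p) < (1 - \<theta>) * \<rho>"
    by (rule order_tendstoD(2)) (use \<rho> \<theta> in simp)
  then obtain M where M: "\<And>n. n \<le> M \<Longrightarrow> N (g n p - p) \<le> (1 - \<theta>) * \<rho>"
    unfolding eventually_at_bot_linorder by (meson less_imp_le)
  have "N (pullback_limit t - p) < \<epsilon>" if "t \<le> min M (n0 + 1)" for t
    using pullback_limit_in_ball[of t \<rho>] that M \<rho> by fastforce
  then show "\<forall>\<^sub>F t in at_bot. N (pullback_limit t - p) < \<epsilon>"
    unfolding eventually_at_bot_linorder by blast
qed

definition entire_solution :: "int \<Rightarrow> 'a" where
  "entire_solution t =
     (if t \<le> n0 then pullback_limit t else flow g n0 (nat (t - n0)) (pullback_limit n0))"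

lemma entire_solution_step: "entire_solution (t + 1) = g t (entire_solution t)"
proof (cases "t < n0")
  case True
  then show ?thesis
    by (simp add: entire_solution_def pullback_limit_step)
next
  case False
  then have "nat (t + 1 - n0) = Suc (nat (t - n0))"
    by simp
  with False show ?thesis
    by (auto simp: entire_solution_def)
qed

lemma entire_solution_tendsto: "(entire_solution \<longlongrightarrow> p) at_bot"
proof (rule Lim_transform_eventually[OF pullback_limit_tendsto])
  show "\<forall>\<^sub>F t in at_bot. pullback_limit t = entire_solution t"
    unfolding eventually_at_bot_linorder by (auto simp: entire_solution_def)
qed

lemma solutions_eq_if_bounded_in_past:
  assumes x: "\<And>n. x (n + 1) = g n (x n)" and y: "\<And>n. y (n + 1) = g n (y n)"
    and bounded: "\<And>n. n \<le> M \<Longrightarrow> N (x n - p) \<le> \<delta> \<and> N (y n - p) \<le> \<delta>"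
  shows "x = y"
proof
  fix t
  define m where "m = min t (min M (n0 + 1))"
  have "N (x m - y m) \<le> \<theta> ^ i * (2 * \<delta>)" for i
  proof -
    let ?s = "m - int i"
    have s: "?s \<le> M" "?s + int i \<le> n0 + 1"
      by (auto simp: m_def min_def)
    have "x m = flow g ?s i (x ?s)" "y m = flow g ?s i (y ?s)"
      using solution_eq_flow[of x g ?s i] solution_eq_flow[of y g ?s i] x y by simp_all
    moreover have "N (flow g ?s i (x ?s) - flow g ?s i (y ?s)) \<le> \<theta> ^ i * N (x ?s - y ?s)"
      using bounded[of ?s] s by (intro flow_contraction) auto
    moreover have "N (x ?s - y ?s) \<le> N (x ?s - p) + N (p - y ?s)"
      by (rule N_triangle)
    then have "N (x ?s - y ?s) \<le> 2 * \<delta>"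
      using bounded[OF s(1)] N_commute[of p "y ?s"] by simp
    then have "\<theta> ^ i * N (x ?s - y ?s) \<le> \<theta> ^ i * (2 * \<delta>)"
      using \<theta> by (intro mult_left_mono) auto
    ultimately show ?thesis
      by simp
  qed
  moreover have "(\<lambda>i. \<theta> ^ i * (2 * \<delta>)) \<longlonglongrightarrow> 0"
    using \<theta> by (simp add: LIMSEQ_power_zero tendsto_mult_left_zero)
  ultimately have "N (x m - y m) \<le> 0"
    using LIMSEQ_le_const by blast
  then have "x m = y m"
    by (simp add: N_le_0_iff)
  then show "x t = y t"
    using solutions_eq_forward[where x = x and y = y and g = g, OF x y, of m t] by (simp add: m_def)
qed

theorem entire_solution_unique: "\<exists>!x. (\<forall>n. x (n + 1) = g n (x n)) \<and> (x \<longlongrightarrow> p) at_bot"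
proof (rule ex1I[of _ entire_solution])
  show "(\<forall>n. entire_solution (n + 1) = g n (entire_solution n)) \<and> (entire_solution \<longlongrightarrow> p) at_bot"
    using entire_solution_step entire_solution_tendsto by blast
next
  fix y
  assume y: "(\<forall>n. y (n + 1) = g n (y n)) \<and> (y \<longlongrightarrow> p) at_bot"
  then have "((\<lambda>n. N (y n - p)) \<longlongrightarrow> 0) at_bot"
    using tendsto_iff_N by blast
  then have "\<forall>\<^sub>F n in at_bot. N (y n - p) < \<delta>"
    by (rule order_tendstoD(2)) (rule \<delta>)
  then obtain M where M: "\<And>n. n \<le> M \<Longrightarrow> N (y n - p) \<le> \<delta>"
    unfolding eventually_at_bot_linorder by (meson less_imp_le)
  have "N (entire_solution n - p) \<le> \<delta>" if "n \<le> n0" for n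
    using that defect_le by (auto simp: entire_solution_def intro!: pullback_limit_in_ball)
  then show "y = entire_solution"
    using y M by (intro solutions_eq_if_bounded_in_past[where M = "min M n0"])
      (auto simp: entire_solution_step)
qed

end

section \<open>Solutions converging to a stable fixed point in the past\<close>

lemma bounded_linear_partial: "bounded_linear (\<lambda>v. blinfun_apply F (v, 0))"
  by (intro bounded_linear_compose[OF blinfun.bounded_linear_right] bounded_linear_Pair
      bounded_linear_ident bounded_linear_zero)

lemma Dx_mult_vec: "(*v) (Dx f' z) = (\<lambda>v. blinfun_apply (f' z) (v, 0))"
  unfolding Dx_def by (rule matrix_vector_mul(3)[OF bounded_linear_partial])

lemma has_derivative_partial:
  assumes "\<And>z. (f has_derivative blinfun_apply (f' z)) (at z)"
  shows "((\<lambda>w. f (w, l)) has_derivative (\<lambda>v. f' (w, l) (v, 0))) (at w within S)"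
proof -
  have "((\<lambda>w. (w, l)) has_derivative (\<lambda>v. (v, 0))) (at w within S)"
    by (intro has_derivative_Pair has_derivative_ident has_derivative_const)
  from has_derivative_compose[OF this assms] show ?thesis .
qed

lemma onorm_partial_diff_le:
  assumes "norm (F - G) \<le> \<epsilon>"
  shows "onorm (\<lambda>v. blinfun_apply F (v, 0) - blinfun_apply G (v, 0)) \<le> \<epsilon>"
proof (rule onorm_bound)
  show "0 \<le> \<epsilon>"
    using assms norm_ge_zero order_trans by blast
  fix v
  have "norm (F (v, 0) - G (v, 0)) = norm ((F - G) (v, 0))"
    by (simp add: blinfun.diff_left)
  also have "\<dots> \<le> norm (F - G) * norm v"
    using norm_blinfun[of "F - G" "(v, 0)"] by (simp add: norm_Pair)
  also have "\<dots> \<le> \<epsilon> * norm v"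
    using assms by (intro mult_right_mono) auto
  finally show "norm (F (v, 0) - G (v, 0)) \<le> \<epsilon> * norm v" .
qed

lemma partial_derivative_uniform_approx:
  fixes f :: "'a::real_normed_vector \<times> 'b::real_normed_vector \<Rightarrow> 'c::real_normed_vector"
  assumes f_deriv: "\<And>z. (f has_derivative blinfun_apply (f' z)) (at z)"
    and f'_cont: "isCont f' (x0, l0)" and "0 < \<epsilon>"
  shows "\<exists>\<eta>>0. \<forall>x y l. norm (x - x0) < \<eta> \<longrightarrow> norm (y - x0) < \<eta> \<longrightarrow> norm (l - l0) < \<eta> \<longrightarrow>
           norm (f (x, l) - f (y, l) - f' (x0, l0) (x - y, 0)) \<le> \<epsilon> * norm (x - y)"
proof -
  obtain \<eta> where "0 < \<eta>" and \<eta>: "\<And>z. dist z (x0, l0) < \<eta> \<Longrightarrow> dist (f' z) (f' (x0, l0)) < \<epsilon>"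
    using f'_cont \<open>0 < \<epsilon>\<close> unfolding continuous_at_eps_delta by blast
  let ?A = "\<lambda>v. blinfun_apply (f' (x0, l0)) (v, 0)"
  have "norm (f (x, l) - f (y, l) - ?A (x - y)) \<le> \<epsilon> * norm (x - y)"
    if x: "x \<in> ball x0 (\<eta> / 2)" and y: "y \<in> ball x0 (\<eta> / 2)" and l: "norm (l - l0) < \<eta> / 2"
    for x y l
  proof -
    let ?S = "ball x0 (\<eta> / 2)"
    have deriv: "((\<lambda>w. f (w, l) - ?A w) has_derivative (\<lambda>v. f' (w, l) (v, 0) - ?A v))
      (at w within ?S)" for w
      by (intro has_derivative_diff has_derivative_partial[OF f_deriv]
          bounded_linear_imp_has_derivative[OF bounded_linear_partial])
    have "onorm (\<lambda>v. f' (w, l) (v, 0) - ?A v) \<le> \<epsilon>" if "w \<in> ?S" for w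
    proof (rule onorm_partial_diff_le)
      have "dist (w, l) (x0, l0) \<le> dist w x0 + norm (l - l0)"
        using norm_Pair_le[of "w - x0" "l - l0"] by (simp add: dist_norm)
      also have "\<dots> < \<eta>"
        using that l by (simp add: dist_commute)
      finally show "norm (f' (w, l) - f' (x0, l0)) \<le> \<epsilon>"
        using \<eta> by (simp add: dist_norm less_imp_le)
    qed
    then have "norm ((f (x, l) - ?A x) - (f (y, l) - ?A y)) \<le> \<epsilon> * norm (x - y)"
      using differentiable_bound[OF convex_ball deriv] x y by blast
    moreover have "f (x, l) - f (y, l) - ?A (x - y) = (f (x, l) - ?A x) - (f (y, l) - ?A y)"
      using linear_diff[OF bounded_linear.linear[OF bounded_linear_partial[of "f' (x0, l0)"]],
          of x y]
      by (simp add: algebra_simps)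
    ultimately show ?thesis
      by (simp only:)
  qed
  then show ?thesis
    using \<open>0 < \<eta>\<close> by (intro exI[of _ "\<eta> / 2"]) (auto simp: dist_norm norm_minus_commute)
qed

lemma local_uniform_contraction:
  fixes f :: "'a::real_normed_vector \<times> 'b::real_normed_vector \<Rightarrow> 'a"
  assumes f_deriv: "\<And>z. (f has_derivative blinfun_apply (f' z)) (at z)"
    and f'_cont: "isCont f' (x0, l0)"
    and stable: "exponentially_stable (\<lambda>v. f' (x0, l0) (v, 0))"
  shows "\<exists>N C \<theta> \<delta> \<eta>. equivalent_norm N C \<and> 0 \<le> \<theta> \<and> \<theta> < 1 \<and> 0 < \<delta> \<and> 0 < \<eta> \<and>
           (\<forall>x y l. N (x - x0) \<le> \<delta> \<longrightarrow> N (y - x0) \<le> \<delta> \<longrightarrow> norm (l - l0) < \<eta> \<longrightarrow>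
              N (f (x, l) - f (y, l)) \<le> \<theta> * N (x - y))"
proof -
  let ?A = "\<lambda>v. blinfun_apply (f' (x0, l0)) (v, 0)"
  obtain N C \<theta> where "equivalent_norm N C" and \<theta>: "0 \<le> \<theta>" "\<theta> < 1"
    and contr: "\<And>v. N (?A v) \<le> \<theta> * N v"
    using exponentially_stable_imp_adapted_norm[OF bounded_linear.linear[OF bounded_linear_partial]
        stable]
    by blast
  interpret equivalent_norm N C by fact
  define \<epsilon> where "\<epsilon> = (1 - \<theta>) / (2 * max C 1)"
  have "0 < \<epsilon>"
    using \<theta> by (simp add: \<epsilon>_def)
  then obtain \<eta> where "0 < \<eta>" and approx: "\<And>x y l. norm (x - x0) < \<eta> \<Longrightarrow> norm (y - x0) < \<eta> \<Longrightarrow>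
      norm (l - l0) < \<eta> \<Longrightarrow> norm (f (x, l) - f (y, l) - ?A (x - y)) \<le> \<epsilon> * norm (x - y)"
    using partial_derivative_uniform_approx[OF f_deriv f'_cont] by blast
  have "N (f (x, l) - f (y, l)) \<le> (1 + \<theta>) / 2 * N (x - y)"
    if "N (x - x0) \<le> \<eta> / 2" "N (y - x0) \<le> \<eta> / 2" "norm (l - l0) < \<eta>" for x y l
  proof -
    define E where "E = f (x, l) - f (y, l) - ?A (x - y)"
    have "norm E \<le> \<epsilon> * norm (x - y)"
      unfolding E_def using that norm_le_N[of "x - x0"] norm_le_N[of "y - x0"] \<open>0 < \<eta>\<close>
      by (intro approx) auto
    then have "N (?A (x - y) + E) \<le> (1 + \<theta>) / 2 * N (x - y)"
      using \<theta> by (intro N_perturbed_contraction[OF contr]) (simp_all add: \<epsilon>_def)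
    moreover have "?A (x - y) + E = f (x, l) - f (y, l)"
      by (simp add: E_def)
    ultimately show ?thesis
      by simp
  qed
  then show ?thesis
    using \<theta> \<open>0 < \<eta>\<close> \<open>equivalent_norm N C\<close>
    by (intro exI[of _ N] exI[of _ C] exI[of _ "(1 + \<theta>) / 2"] exI[of _ "\<eta> / 2"] exI[of _ \<eta>]) auto
qed

theorem unique_solution_tendsto_stable_fixed_point:
  fixes f :: "'a::banach \<times> 'b::real_normed_vector \<Rightarrow> 'a" and \<mu> :: "int \<Rightarrow> 'b"
  assumes f_deriv: "\<And>z. (f has_derivative blinfun_apply (f' z)) (at z)"
    and f'_cont: "isCont f' (x0, l0)"
    and fixed: "f (x0, l0) = x0"
    and stable: "exponentially_stable (\<lambda>v. f' (x0, l0) (v, 0))"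
    and \<mu>: "(\<mu> \<longlongrightarrow> l0) at_bot"
  shows "\<exists>!x. (\<forall>n. x (n + 1) = f (x n, \<mu> n)) \<and> (x \<longlongrightarrow> x0) at_bot"
proof -
  obtain N C \<theta> \<delta> \<eta> where "equivalent_norm N C" and \<theta>: "0 \<le> \<theta>" "\<theta> < 1" and "0 < \<delta>" "0 < \<eta>"
    and contraction: "\<And>x y l. N (x - x0) \<le> \<delta> \<Longrightarrow> N (y - x0) \<le> \<delta> \<Longrightarrow> norm (l - l0) < \<eta> \<Longrightarrow>
      N (f (x, l) - f (y, l)) \<le> \<theta> * N (x - y)"
    using local_uniform_contraction[OF f_deriv f'_cont stable] by blast
  interpret equivalent_norm N C by fact
  have defect: "((\<lambda>n. f (x0, \<mu> n)) \<longlongrightarrow> x0) at_bot"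
    using isCont_tendsto_compose[OF has_derivative_continuous[OF f_deriv]
        tendsto_Pair[OF tendsto_const[of x0] \<mu>]]
    by (simp add: fixed)
  have "\<forall>\<^sub>F n in at_bot. N (f (x0, \<mu> n) - x0) < (1 - \<theta>) * \<delta>"
    using tendsto_iff_N[THEN iffD1, OF defect] by (rule order_tendstoD(2)) (use \<theta> \<open>0 < \<delta>\<close> in simp)
  moreover have "\<forall>\<^sub>F n in at_bot. dist (\<mu> n) l0 < \<eta>"
    using \<mu> \<open>0 < \<eta>\<close> by (rule tendstoD)
  ultimately obtain n0 where
    n0: "\<And>n. n \<le> n0 \<Longrightarrow> N (f (x0, \<mu> n) - x0) < (1 - \<theta>) * \<delta> \<and> dist (\<mu> n) l0 < \<eta>"
    unfolding eventually_at_bot_linorder by (metis min.cobounded1 min.cobounded2 order_trans)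
  have "N (f (x, \<mu> n) - f (y, \<mu> n)) \<le> \<theta> * N (x - y)"
    if "n \<le> n0" "N (x - x0) \<le> \<delta>" "N (y - x0) \<le> \<delta>" for n x y
    using that n0[of n] by (intro contraction) (auto simp: dist_norm)
  moreover have "N (f (x0, \<mu> n) - x0) \<le> (1 - \<theta>) * \<delta>" if "n \<le> n0" for n
    using n0[OF that] by simp
  ultimately interpret pullback_contraction N C "\<lambda>n x. f (x, \<mu> n)" x0 \<delta> \<theta> n0
    by unfold_locales (use \<theta> \<open>0 < \<delta>\<close> defect N_add N_minus norm_le_N N_le in auto)
  show ?thesis
    by (rule entire_solution_unique)
qed

theorem mainTheorem1:
  fixes f :: "(real^'l) \<times> (real^'m) \<Rightarrow> real^'l"
    and f' :: "(real^'l) \<times> (real^'m) \<Rightarrow> ((real^'l) \<times> (real^'m)) \<Rightarrow>\<^sub>L (real^'l)"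
    and \<Lambda> :: "real \<Rightarrow> real^'m"
    and lm lp :: "real^'m"
    and X :: "real \<Rightarrow> real^'l"
    and Xm Xp :: "real^'l"
  assumes f_deriv: "\<And>z. (f has_derivative blinfun_apply (f' z)) (at z)"
    and f'_cont: "continuous_on UNIV f'"
    and shift: "parameter_shift \<Lambda> lm lp"
    and path: "stable_path f f' \<Lambda> lm lp X Xm Xp"
  shows "\<forall>r>0. \<exists>!x :: int \<Rightarrow> real^'l.
           (\<forall>n. x (n + 1) = f (x n, \<Lambda> (r * of_int n))) \<and> (x \<longlongrightarrow> Xm) at_bot"
proof (intro allI impI)
  fix r :: real
  assume "0 < r"
  have fixed: "f (Xm, lm) = Xm" and "spectral_rad (Dx f' (Xm, lm)) < 1"
    using path unfolding stable_path_def by auto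
  then have "exponentially_stable (\<lambda>v. f' (Xm, lm) (v, 0))"
    using spectral_rad_lt_1_imp_exponentially_stable[of "Dx f' (Xm, lm)"]
    by (simp only: Dx_mult_vec)
  moreover have "isCont f' (Xm, lm)"
    using f'_cont by (simp add: continuous_on_eq_continuous_at)
  moreover have "((\<lambda>n::int. \<Lambda> (r * of_int n)) \<longlongrightarrow> lm) at_bot"
  proof -
    have "(\<Lambda> \<longlongrightarrow> lm) at_bot"
      using shift unfolding parameter_shift_def by blast
    moreover have "filterlim (\<lambda>n::int. r * of_int n) at_bot at_bot"
      by (rule filterlim_tendsto_pos_mult_at_bot[OF tendsto_const \<open>0 < r\<close>
          filterlim_real_of_int_at_bot])
    ultimately show ?thesis
      by (rule filterlim_compose)
  qed
  ultimately show "\<exists>!x :: int \<Rightarrow> real^'l.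
      (\<forall>n. x (n + 1) = f (x n, \<Lambda> (r * of_int n))) \<and> (x \<longlongrightarrow> Xm) at_bot"
    using unique_solution_tendsto_stable_fixed_point[OF f_deriv _ fixed] by blast
qed

end
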